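(* Let $\mathcal{C}$ be a bicomplete category with splitting coproducts and disjoint coproducts. Then every cofibration $c:A\to B$ of the generalized core model structure on $\mathcal{C}$ is isomorphic (as an object under $A$) to a canonical coproduct inclusion $i_1:A\to A\sqcup X$ for some object $X$; i.e. there is an isomorphism $\phi:B\to A\sqcup X$ with $\phi c=i_1$.
   Context: Bicomplete means having all finite limits and finite colimits. The generalized core model structure on $\mathcal{C}$ has weak equivalences the morphisms $f:A\to B$ for which some morphism $B\to A$ exists, cofibrations the morphisms having the left lifting property against all retractions (morphisms $r$ with $rs=1$ for some $s$), and fibrations the morphisms having the right lifting property against all cofibrations that are weak equivalences. Splitting coproducts: every $f:X\to A\sqcup B$ is isomorphic to $f_L\sqcup f_R$ for some $f_L:X_L\to A$, $f_R:X_R\to B$ with $X\cong X_L\sqcup X_R$. Disjoint coproducts: coproduct injections are monic, the pullback of $i_1:A\to A\sqcup B$ and $i_2:B\to A\sqcup B$ is the initial object, and the pullback of $i_1$ along itself (resp. $i_2$ along itself) is $A$ (resp. $B$) with identity maps. *)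

theory Defs
  imports Main
begin

record ('o, 'm) cat =
  Obj :: "'o set"
  Arr :: "'m set"
  Dom :: "'m \<Rightarrow> 'o"
  Cod :: "'m \<Rightarrow> 'o"
  Idm :: "'o \<Rightarrow> 'm"
  Cmp :: "'m \<Rightarrow> 'm \<Rightarrow> 'm"  (* Cmp C g f = g \<circ> f *)

definition hom :: "('o, 'm) cat \<Rightarrow> 'o \<Rightarrow> 'o \<Rightarrow> 'm set" where
  "hom C a b = {f \<in> Arr C. Dom C f = a \<and> Cod C f = b}"

definition is_category :: "('o, 'm) cat \<Rightarrow> bool" where
  "is_category C \<longleftrightarrow>
     (\<forall>f\<in>Arr C. Dom C f \<in> Obj C \<and> Cod C f \<in> Obj C) \<and>
     (\<forall>a\<in>Obj C. Idm C a \<in> hom C a a) \<and>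
     (\<forall>f\<in>Arr C. \<forall>g\<in>Arr C. Cod C f = Dom C g \<longrightarrow>
        Cmp C g f \<in> hom C (Dom C f) (Cod C g)) \<and>
     (\<forall>f\<in>Arr C. Cmp C f (Idm C (Dom C f)) = f \<and> Cmp C (Idm C (Cod C f)) f = f) \<and>
     (\<forall>f\<in>Arr C. \<forall>g\<in>Arr C. \<forall>h\<in>Arr C. Cod C f = Dom C g \<longrightarrow> Cod C g = Dom C h \<longrightarrow>
        Cmp C h (Cmp C g f) = Cmp C (Cmp C h g) f)"

definition iso :: "('o, 'm) cat \<Rightarrow> 'm \<Rightarrow> bool" where
  "iso C f \<longleftrightarrow> f \<in> Arr C \<and>
     (\<exists>g\<in>hom C (Cod C f) (Dom C f). Cmp C g f = Idm C (Dom C f) \<and> Cmp C f g = Idm C (Cod C f))"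

definition monic :: "('o, 'm) cat \<Rightarrow> 'm \<Rightarrow> bool" where
  "monic C m \<longleftrightarrow> m \<in> Arr C \<and>
     (\<forall>x\<in>Arr C. \<forall>y\<in>Arr C. Cod C x = Dom C m \<longrightarrow> Cod C y = Dom C m \<longrightarrow> Dom C x = Dom C y \<longrightarrow>
        Cmp C m x = Cmp C m y \<longrightarrow> x = y)"

definition initial :: "('o, 'm) cat \<Rightarrow> 'o \<Rightarrow> bool" where
  "initial C I \<longleftrightarrow> I \<in> Obj C \<and> (\<forall>Y\<in>Obj C. \<exists>!h. h \<in> hom C I Y)"

text \<open>A finite diagram shape is a finite category whose objects and arrows are
  encoded as natural numbers; a diagram is a functor (on objects and on arrows).\<close>

definition finite_category :: "(nat, nat) cat \<Rightarrow> bool" where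
  "finite_category J \<longleftrightarrow> is_category J \<and> finite (Obj J) \<and> finite (Arr J)"

definition is_diagram ::
  "(nat, nat) cat \<Rightarrow> ('o, 'm) cat \<Rightarrow> (nat \<Rightarrow> 'o) \<Rightarrow> (nat \<Rightarrow> 'm) \<Rightarrow> bool" where
  "is_diagram J C Do Da \<longleftrightarrow>
     (\<forall>j\<in>Obj J. Do j \<in> Obj C) \<and>
     (\<forall>u\<in>Arr J. Da u \<in> hom C (Do (Dom J u)) (Do (Cod J u))) \<and>
     (\<forall>j\<in>Obj J. Da (Idm J j) = Idm C (Do j)) \<and>
     (\<forall>u\<in>Arr J. \<forall>v\<in>Arr J. Cod J u = Dom J v \<longrightarrow> Da (Cmp J v u) = Cmp C (Da v) (Da u))"

definition is_cone ::
  "(nat, nat) cat \<Rightarrow> ('o, 'm) cat \<Rightarrow> (nat \<Rightarrow> 'o) \<Rightarrow> (nat \<Rightarrow> 'm) \<Rightarrow> 'o \<Rightarrow> (nat \<Rightarrow> 'm) \<Rightarrow> bool" where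
  "is_cone J C Do Da L l \<longleftrightarrow> L \<in> Obj C \<and>
     (\<forall>j\<in>Obj J. l j \<in> hom C L (Do j)) \<and>
     (\<forall>u\<in>Arr J. Cmp C (Da u) (l (Dom J u)) = l (Cod J u))"

definition is_limit ::
  "(nat, nat) cat \<Rightarrow> ('o, 'm) cat \<Rightarrow> (nat \<Rightarrow> 'o) \<Rightarrow> (nat \<Rightarrow> 'm) \<Rightarrow> 'o \<Rightarrow> (nat \<Rightarrow> 'm) \<Rightarrow> bool" where
  "is_limit J C Do Da L l \<longleftrightarrow> is_cone J C Do Da L l \<and>
     (\<forall>L' l'. is_cone J C Do Da L' l' \<longrightarrow>
        (\<exists>!h. h \<in> hom C L' L \<and> (\<forall>j\<in>Obj J. Cmp C (l j) h = l' j)))"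

definition is_cocone ::
  "(nat, nat) cat \<Rightarrow> ('o, 'm) cat \<Rightarrow> (nat \<Rightarrow> 'o) \<Rightarrow> (nat \<Rightarrow> 'm) \<Rightarrow> 'o \<Rightarrow> (nat \<Rightarrow> 'm) \<Rightarrow> bool" where
  "is_cocone J C Do Da L l \<longleftrightarrow> L \<in> Obj C \<and>
     (\<forall>j\<in>Obj J. l j \<in> hom C (Do j) L) \<and>
     (\<forall>u\<in>Arr J. Cmp C (l (Cod J u)) (Da u) = l (Dom J u))"

definition is_colimit ::
  "(nat, nat) cat \<Rightarrow> ('o, 'm) cat \<Rightarrow> (nat \<Rightarrow> 'o) \<Rightarrow> (nat \<Rightarrow> 'm) \<Rightarrow> 'o \<Rightarrow> (nat \<Rightarrow> 'm) \<Rightarrow> bool" where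
  "is_colimit J C Do Da L l \<longleftrightarrow> is_cocone J C Do Da L l \<and>
     (\<forall>L' l'. is_cocone J C Do Da L' l' \<longrightarrow>
        (\<exists>!h. h \<in> hom C L L' \<and> (\<forall>j\<in>Obj J. Cmp C h (l j) = l' j)))"

definition bicomplete :: "('o, 'm) cat \<Rightarrow> bool" where
  "bicomplete C \<longleftrightarrow>
     (\<forall>J Do Da. finite_category J \<and> is_diagram J C Do Da \<longrightarrow> (\<exists>L l. is_limit J C Do Da L l)) \<and>
     (\<forall>J Do Da. finite_category J \<and> is_diagram J C Do Da \<longrightarrow> (\<exists>L l. is_colimit J C Do Da L l))"

definition is_coproduct :: "('o, 'm) cat \<Rightarrow> 'o \<Rightarrow> 'o \<Rightarrow> 'o \<Rightarrow> 'm \<Rightarrow> 'm \<Rightarrow> bool" where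
  "is_coproduct C A B S i1 i2 \<longleftrightarrow> i1 \<in> hom C A S \<and> i2 \<in> hom C B S \<and>
     (\<forall>Y f g. f \<in> hom C A Y \<longrightarrow> g \<in> hom C B Y \<longrightarrow>
        (\<exists>!h. h \<in> hom C S Y \<and> Cmp C h i1 = f \<and> Cmp C h i2 = g))"

definition is_pullback :: "('o, 'm) cat \<Rightarrow> 'm \<Rightarrow> 'm \<Rightarrow> 'o \<Rightarrow> 'm \<Rightarrow> 'm \<Rightarrow> bool" where
  "is_pullback C f g P p q \<longleftrightarrow> f \<in> Arr C \<and> g \<in> Arr C \<and> Cod C f = Cod C g \<and>
     p \<in> hom C P (Dom C f) \<and> q \<in> hom C P (Dom C g) \<and> Cmp C f p = Cmp C g q \<and>
     (\<forall>Q p' q'. p' \<in> hom C Q (Dom C f) \<longrightarrow> q' \<in> hom C Q (Dom C g) \<longrightarrow> Cmp C f p' = Cmp C g q' \<longrightarrow>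
        (\<exists>!h. h \<in> hom C Q P \<and> Cmp C p h = p' \<and> Cmp C q h = q'))"

text \<open>Splitting coproducts: every f : X \<rightarrow> A \<squnion> B is isomorphic (over A \<squnion> B) to
  f_L \<squnion> f_R, i.e. there is a coproduct X_L \<squnion> X_R and an isomorphism
  \<theta> : X_L \<squnion> X_R \<rightarrow> X with f \<circ> \<theta> = f_L \<squnion> f_R.\<close>

definition splitting_coproducts :: "('o, 'm) cat \<Rightarrow> bool" where
  "splitting_coproducts C \<longleftrightarrow>
     (\<forall>A B S i1 i2 X f. is_coproduct C A B S i1 i2 \<longrightarrow> f \<in> hom C X S \<longrightarrow>
        (\<exists>XL XR fL fR Y j1 j2 \<theta>.
           fL \<in> hom C XL A \<and> fR \<in> hom C XR B \<and>
           is_coproduct C XL XR Y j1 j2 \<and> \<theta> \<in> hom C Y X \<and> iso C \<theta> \<and>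
           Cmp C (Cmp C f \<theta>) j1 = Cmp C i1 fL \<and>
           Cmp C (Cmp C f \<theta>) j2 = Cmp C i2 fR))"

definition disjoint_coproducts :: "('o, 'm) cat \<Rightarrow> bool" where
  "disjoint_coproducts C \<longleftrightarrow>
     (\<forall>A B S i1 i2. is_coproduct C A B S i1 i2 \<longrightarrow>
        monic C i1 \<and> monic C i2 \<and>
        (\<forall>P p q. is_pullback C i1 i2 P p q \<longrightarrow> initial C P) \<and>
        is_pullback C i1 i1 A (Idm C A) (Idm C A) \<and>
        is_pullback C i2 i2 B (Idm C B) (Idm C B))"

definition retraction :: "('o, 'm) cat \<Rightarrow> 'm \<Rightarrow> bool" where
  "retraction C r \<longleftrightarrow> r \<in> Arr C \<and> (\<exists>s\<in>hom C (Cod C r) (Dom C r). Cmp C r s = Idm C (Cod C r))"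

definition llp :: "('o, 'm) cat \<Rightarrow> 'm \<Rightarrow> 'm \<Rightarrow> bool" where
  "llp C i p \<longleftrightarrow> i \<in> Arr C \<and> p \<in> Arr C \<and>
     (\<forall>u v. u \<in> hom C (Dom C i) (Dom C p) \<longrightarrow> v \<in> hom C (Cod C i) (Cod C p) \<longrightarrow>
        Cmp C p u = Cmp C v i \<longrightarrow>
        (\<exists>h\<in>hom C (Cod C i) (Dom C p). Cmp C h i = u \<and> Cmp C p h = v))"

definition core_weq :: "('o, 'm) cat \<Rightarrow> 'm \<Rightarrow> bool" where
  "core_weq C f \<longleftrightarrow> f \<in> Arr C \<and> hom C (Cod C f) (Dom C f) \<noteq> {}"

definition core_cofibration :: "('o, 'm) cat \<Rightarrow> 'm \<Rightarrow> bool" where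
  "core_cofibration C c \<longleftrightarrow> c \<in> Arr C \<and> (\<forall>r. retraction C r \<longrightarrow> llp C c r)"

definition core_fibration :: "('o, 'm) cat \<Rightarrow> 'm \<Rightarrow> bool" where
  "core_fibration C f \<longleftrightarrow> f \<in> Arr C \<and>
     (\<forall>i. core_cofibration C i \<and> core_weq C i \<longrightarrow> llp C i f)"

end

theory Submission
  imports Defs
begin

text \<open>Lifting the cofibration \<open>c : A \<rightarrow> B\<close> against the retraction \<open>[c, 1] : A \<squnion> B \<rightarrow> B\<close>
  gives \<open>h : B \<rightarrow> A \<squnion> B\<close> with \<open>h c = i\<^sub>1\<close>. Splitting \<open>h\<close> decomposes \<open>B \<cong> X\<^sub>L \<squnion> X\<^sub>R\<close>
  with \<open>X\<^sub>L\<close> sent into \<open>A\<close> and \<open>X\<^sub>R\<close> into \<open>B\<close>. Splitting \<open>c\<close>, transported to \<open>X\<^sub>L \<squnion> X\<^sub>R\<close>, the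
  part of \<open>A\<close> landing in \<open>X\<^sub>R\<close> would be sent by \<open>h c = i\<^sub>1\<close> into both summands of
  \<open>A \<squnion> B\<close>, hence maps to the initial pullback of \<open>i\<^sub>1\<close> and \<open>i\<^sub>2\<close>; so \<open>c\<close> factors through
  \<open>X\<^sub>L\<close>, and since \<open>c\<close> is monic this factorization is inverse to \<open>X\<^sub>L \<rightarrow> A\<close>.\<close>

locale category =
  fixes C :: "('o, 'm) cat"
  assumes is_category: "is_category C"
begin

abbreviation comp :: "'m \<Rightarrow> 'm \<Rightarrow> 'm" (infixr \<open>\<cdot>\<close> 55) where
  "g \<cdot> f \<equiv> Cmp C g f"

lemma hom_objs: "f \<in> hom C a b \<Longrightarrow> a \<in> Obj C \<and> b \<in> Obj C"
  using is_category unfolding is_category_def hom_def by auto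

lemma comp_in_hom: "f \<in> hom C a b \<Longrightarrow> g \<in> hom C b c \<Longrightarrow> g \<cdot> f \<in> hom C a c"
  using is_category unfolding is_category_def hom_def by auto

lemma Idm_in_hom: "a \<in> Obj C \<Longrightarrow> Idm C a \<in> hom C a a"
  using is_category unfolding is_category_def by auto

lemma comp_Idm_left: "f \<in> hom C a b \<Longrightarrow> Idm C b \<cdot> f = f"
  using is_category unfolding is_category_def hom_def by auto

lemma comp_Idm_right: "f \<in> hom C a b \<Longrightarrow> f \<cdot> Idm C a = f"
  using is_category unfolding is_category_def hom_def by auto

lemma comp_assoc:
  "f \<in> hom C a b \<Longrightarrow> g \<in> hom C b c \<Longrightarrow> h \<in> hom C c d \<Longrightarrow> h \<cdot> (g \<cdot> f) = (h \<cdot> g) \<cdot> f"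
  using is_category unfolding is_category_def hom_def by auto

lemma isoE:
  assumes "iso C f" and "f \<in> hom C a b"
  obtains g where "g \<in> hom C b a" and "g \<cdot> f = Idm C a" and "f \<cdot> g = Idm C b"
  using assms unfolding iso_def hom_def by auto

lemma iso_inverse:
  "f \<in> hom C a b \<Longrightarrow> g \<in> hom C b a \<Longrightarrow> g \<cdot> f = Idm C a \<Longrightarrow> f \<cdot> g = Idm C b \<Longrightarrow> iso C g"
  unfolding iso_def hom_def by auto

lemma monicI:
  assumes "m \<in> hom C a b"
    and "\<And>x y z. x \<in> hom C z a \<Longrightarrow> y \<in> hom C z a \<Longrightarrow> m \<cdot> x = m \<cdot> y \<Longrightarrow> x = y"
  shows "monic C m"
  using assms unfolding monic_def hom_def by auto

lemma monic_cancel: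
  "monic C m \<Longrightarrow> m \<in> hom C a b \<Longrightarrow> x \<in> hom C z a \<Longrightarrow> y \<in> hom C z a \<Longrightarrow> m \<cdot> x = m \<cdot> y \<Longrightarrow> x = y"
  unfolding monic_def hom_def by auto

lemma monic_of_comp_monic:
  assumes "monic C (h \<cdot> m)" and m: "m \<in> hom C a b" and h: "h \<in> hom C b c"
  shows "monic C m"
proof (rule monicI[OF m])
  fix x y z assume x: "x \<in> hom C z a" and y: "y \<in> hom C z a" and "m \<cdot> x = m \<cdot> y"
  then have "(h \<cdot> m) \<cdot> x = (h \<cdot> m) \<cdot> y"
    using comp_assoc[OF x m h] comp_assoc[OF y m h] by simp
  then show "x = y" using monic_cancel[OF assms(1) comp_in_hom[OF m h] x y] by simp
qed

lemma monic_factorizations_inverse: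
  assumes "monic C m" "m \<in> hom C X B" and "monic C c" "c \<in> hom C A B"
    and f: "f \<in> hom C X A" and g: "g \<in> hom C A X"
    and "m = c \<cdot> f" and "m \<cdot> g = c"
  shows "f \<cdot> g = Idm C A" and "g \<cdot> f = Idm C X"
proof -
  have "c \<cdot> (f \<cdot> g) = c \<cdot> Idm C A"
    using assms comp_assoc[OF g f] comp_Idm_right by metis
  then show "f \<cdot> g = Idm C A"
    using monic_cancel[OF assms(3,4) comp_in_hom[OF g f]] Idm_in_hom hom_objs[OF f] by blast
  have "m \<cdot> (g \<cdot> f) = m \<cdot> Idm C X"
    using assms comp_assoc[OF f g] comp_Idm_right by metis
  then show "g \<cdot> f = Idm C X"
    using monic_cancel[OF assms(1,2) comp_in_hom[OF f g]] Idm_in_hom hom_objs[OF f] by blast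
qed

lemma initial_hom_unique: "initial C P \<Longrightarrow> f \<in> hom C P Y \<Longrightarrow> g \<in> hom C P Y \<Longrightarrow> f = g"
  unfolding initial_def using hom_objs by blast

lemma initial_homE:
  assumes "initial C P" and "Y \<in> Obj C"
  obtains h where "h \<in> hom C P Y"
  using assms unfolding initial_def by blast

lemma coproduct_injections:
  "is_coproduct C A B S i1 i2 \<Longrightarrow> i1 \<in> hom C A S \<and> i2 \<in> hom C B S"
  unfolding is_coproduct_def by auto

lemma copairE:
  assumes "is_coproduct C A B S i1 i2" and "f \<in> hom C A Y" and "g \<in> hom C B Y"
  obtains h where "h \<in> hom C S Y" and "h \<cdot> i1 = f" and "h \<cdot> i2 = g"
  using assms unfolding is_coproduct_def by blast

lemma coproduct_hom_ext:
  assumes S: "is_coproduct C A B S i1 i2" and h: "h \<in> hom C S Y" and h': "h' \<in> hom C S Y"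
    and "h \<cdot> i1 = h' \<cdot> i1" and "h \<cdot> i2 = h' \<cdot> i2"
  shows "h = h'"
proof -
  have "h \<cdot> i1 \<in> hom C A Y" "h \<cdot> i2 \<in> hom C B Y"
    using coproduct_injections[OF S] comp_in_hom h by blast+
  then have "\<exists>!k. k \<in> hom C S Y \<and> k \<cdot> i1 = h \<cdot> i1 \<and> k \<cdot> i2 = h \<cdot> i2"
    using S unfolding is_coproduct_def by blast
  then show ?thesis using assms by metis
qed

lemma coproduct_iso_left_summand:
  assumes Y: "is_coproduct C X Z Y j1 j2" and g: "g \<in> hom C A X" and f: "f \<in> hom C X A"
    and fg: "f \<cdot> g = Idm C A" and gf: "g \<cdot> f = Idm C X"
  shows "is_coproduct C A Z Y (j1 \<cdot> g) j2"
  unfolding is_coproduct_def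
proof (intro conjI allI impI)
  have j1: "j1 \<in> hom C X Y" and j2: "j2 \<in> hom C Z Y" using coproduct_injections[OF Y] by auto
  show "j1 \<cdot> g \<in> hom C A Y" using comp_in_hom[OF g j1] .
  show "j2 \<in> hom C Z Y" using j2 .
  fix W u v assume u: "u \<in> hom C A W" and v: "v \<in> hom C Z W"
  obtain k where k: "k \<in> hom C Y W" "k \<cdot> j1 = u \<cdot> f" "k \<cdot> j2 = v"
    using copairE[OF Y comp_in_hom[OF f u] v] by blast
  show "\<exists>!k. k \<in> hom C Y W \<and> k \<cdot> (j1 \<cdot> g) = u \<and> k \<cdot> j2 = v"
  proof (rule ex1I[of _ k])
    show "k \<in> hom C Y W \<and> k \<cdot> (j1 \<cdot> g) = u \<and> k \<cdot> j2 = v"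
      using k comp_assoc[OF g j1 k(1)] comp_assoc[OF g f u] fg comp_Idm_right[OF u] by simp
  next
    fix k' assume k': "k' \<in> hom C Y W \<and> k' \<cdot> (j1 \<cdot> g) = u \<and> k' \<cdot> j2 = v"
    then have "k' \<cdot> j1 = u \<cdot> f"
      using comp_assoc[OF g j1, of k' W] comp_assoc[OF f g comp_in_hom[OF j1, of k' W]] gf
        comp_Idm_right[OF comp_in_hom[OF j1, of k' W]] by auto
    then show "k' = k" using coproduct_hom_ext[OF Y, of k' W k] k k' by simp
  qed
qed

end

definition discrete_pair :: "(nat, nat) cat" where
  "discrete_pair = \<lparr>Obj = {0,1}, Arr = {0,1}, Dom = id, Cod = id, Idm = id, Cmp = (\<lambda>g f. f)\<rparr>"

lemma finite_category_discrete_pair: "finite_category discrete_pair"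
  unfolding finite_category_def is_category_def discrete_pair_def hom_def by auto

text \<open>Objects \<open>0, 1, 2\<close>; besides the identities, arrow \<open>3 : 0 \<rightarrow> 2\<close> and arrow \<open>4 : 1 \<rightarrow> 2\<close>.\<close>

definition cospan :: "(nat, nat) cat" where
  "cospan = \<lparr>Obj = {0,1,2}, Arr = {0,1,2,3,4},
         Dom = (\<lambda>u. if u = 3 then 0 else if u = 4 then 1 else u),
         Cod = (\<lambda>u. if u = 3 \<or> u = 4 then 2 else u), Idm = id,
         Cmp = (\<lambda>g f. if f \<in> {0,1,2} then g else f)\<rparr>"

lemma finite_category_cospan: "finite_category cospan"
  unfolding finite_category_def is_category_def cospan_def hom_def by simp

context category
begin

lemma Idm_Idm: "a \<in> Obj C \<Longrightarrow> Idm C a \<cdot> Idm C a = Idm C a"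
  using comp_Idm_left Idm_in_hom by blast

lemma coproduct_exists:
  assumes "bicomplete C" and A: "A \<in> Obj C" and B: "B \<in> Obj C"
  obtains S i1 i2 where "is_coproduct C A B S i1 i2"
proof -
  define Do where "Do = (\<lambda>j::nat. if j = 0 then A else B)"
  define Da where "Da = (\<lambda>j::nat. Idm C (Do j))"
  have "is_diagram discrete_pair C Do Da"
    unfolding is_diagram_def discrete_pair_def Do_def Da_def using A B Idm_in_hom by (auto simp: Idm_Idm)
  then obtain L l where L: "is_colimit discrete_pair C Do Da L l"
    using assms(1) finite_category_discrete_pair unfolding bicomplete_def by blast
  have l0: "l 0 \<in> hom C A L" and l1: "l 1 \<in> hom C B L"
    using L unfolding is_colimit_def is_cocone_def discrete_pair_def Do_def by auto
  have "is_coproduct C A B L (l 0) (l 1)"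
    unfolding is_coproduct_def
  proof (intro conjI l0 l1 allI impI)
    fix Y f g assume f: "f \<in> hom C A Y" and g: "g \<in> hom C B Y"
    define l' where "l' = (\<lambda>j::nat. if j = 0 then f else g)"
    have "is_cocone discrete_pair C Do Da Y l'"
      unfolding is_cocone_def discrete_pair_def Do_def Da_def l'_def
      using f g hom_objs comp_Idm_right by auto
    then obtain h where h: "h \<in> hom C L Y" "\<forall>j\<in>Obj discrete_pair. h \<cdot> l j = l' j"
      and u: "\<And>h'. h' \<in> hom C L Y \<and> (\<forall>j\<in>Obj discrete_pair. h' \<cdot> l j = l' j) \<Longrightarrow> h' = h"
      using L unfolding is_colimit_def by metis
    show "\<exists>!h. h \<in> hom C L Y \<and> h \<cdot> l 0 = f \<and> h \<cdot> l 1 = g"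
    proof (rule ex1I[of _ h])
      show "h \<in> hom C L Y \<and> h \<cdot> l 0 = f \<and> h \<cdot> l 1 = g"
        using h by (simp add: discrete_pair_def l'_def)
    next
      fix h' assume "h' \<in> hom C L Y \<and> h' \<cdot> l 0 = f \<and> h' \<cdot> l 1 = g"
      then show "h' = h" by (intro u) (auto simp: discrete_pair_def l'_def)
    qed
  qed
  then show ?thesis using that by blast
qed

lemma pullback_exists:
  assumes "bicomplete C" and f: "f \<in> hom C A S" and g: "g \<in> hom C B S"
  obtains P p q where "is_pullback C f g P p q"
proof -
  have O: "A \<in> Obj C" "B \<in> Obj C" "S \<in> Obj C" using hom_objs f g by auto
  define Do where "Do = (\<lambda>j::nat. if j = 0 then A else if j = 1 then B else S)"
  define Da where "Da = (\<lambda>j::nat. if j = 3 then f else if j = 4 then g else Idm C (Do j))"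
  have "is_diagram cospan C Do Da"
    unfolding is_diagram_def cospan_def Do_def Da_def using O f g Idm_in_hom
    by (auto simp: comp_Idm_left comp_Idm_right Idm_Idm)
  then obtain L l where L: "is_limit cospan C Do Da L l"
    using assms(1) finite_category_cospan unfolding bicomplete_def by blast
  have l0: "l 0 \<in> hom C L A" and l1: "l 1 \<in> hom C L B"
    and c1: "f \<cdot> l 0 = l 2" and c2: "g \<cdot> l 1 = l 2"
    using L unfolding is_limit_def is_cone_def cospan_def Do_def Da_def by auto
  have "is_pullback C f g L (l 0) (l 1)"
    unfolding is_pullback_def
  proof (intro conjI allI impI)
    show "f \<in> Arr C" "g \<in> Arr C" "Cod C f = Cod C g"
      "l 0 \<in> hom C L (Dom C f)" "l 1 \<in> hom C L (Dom C g)" "f \<cdot> l 0 = g \<cdot> l 1"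
      using f g l0 l1 c1 c2 by (auto simp: hom_def)
    fix Q p' q' assume p': "p' \<in> hom C Q (Dom C f)" and q': "q' \<in> hom C Q (Dom C g)"
      and e: "f \<cdot> p' = g \<cdot> q'"
    have p'': "p' \<in> hom C Q A" and q'': "q' \<in> hom C Q B" using p' q' f g by (auto simp: hom_def)
    define l' where "l' = (\<lambda>j::nat. if j = 0 then p' else if j = 1 then q' else f \<cdot> p')"
    have "is_cone cospan C Do Da Q l'"
      unfolding is_cone_def cospan_def Do_def Da_def l'_def
      using p'' q'' comp_in_hom[OF p'' f] e hom_objs comp_Idm_left by auto
    then obtain h where h: "h \<in> hom C Q L" "\<forall>j\<in>Obj cospan. l j \<cdot> h = l' j"
      and u: "\<And>h'. h' \<in> hom C Q L \<and> (\<forall>j\<in>Obj cospan. l j \<cdot> h' = l' j) \<Longrightarrow> h' = h"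
      using L unfolding is_limit_def by metis
    show "\<exists>!h. h \<in> hom C Q L \<and> l 0 \<cdot> h = p' \<and> l 1 \<cdot> h = q'"
    proof (rule ex1I[of _ h])
      show "h \<in> hom C Q L \<and> l 0 \<cdot> h = p' \<and> l 1 \<cdot> h = q'"
        using h by (simp add: cospan_def l'_def)
    next
      fix h' assume h': "h' \<in> hom C Q L \<and> l 0 \<cdot> h' = p' \<and> l 1 \<cdot> h' = q'"
      then have "l 2 \<cdot> h' = f \<cdot> p'"
        using c1 comp_assoc[OF _ l0 f, of h' Q] by auto
      then show "h' = h" using h' by (intro u) (auto simp: cospan_def l'_def)
    qed
  qed
  then show ?thesis using that by blast
qed

lemma core_cofibration_lift:
  assumes cof: "core_cofibration C c" and c: "c \<in> hom C A B" and S: "is_coproduct C A B S i1 i2"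
  obtains h r where "h \<in> hom C B S" and "r \<in> hom C S B"
    and "h \<cdot> c = i1" and "r \<cdot> i1 = c" and "r \<cdot> h = Idm C B"
proof -
  have i1: "i1 \<in> hom C A S" and i2: "i2 \<in> hom C B S" using coproduct_injections[OF S] by auto
  have idB: "Idm C B \<in> hom C B B" using Idm_in_hom hom_objs[OF c] by blast
  obtain r where r: "r \<in> hom C S B" "r \<cdot> i1 = c" "r \<cdot> i2 = Idm C B"
    using copairE[OF S c idB] by blast
  have "retraction C r" unfolding retraction_def using r i2 by (auto simp: hom_def)
  then have "llp C c r" using cof unfolding core_cofibration_def by blast
  moreover have "r \<cdot> i1 = Idm C B \<cdot> c" using r(2) comp_Idm_left[OF c] by simp
  ultimately obtain h where "h \<in> hom C B S" "h \<cdot> c = i1" "r \<cdot> h = Idm C B"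
    using i1 idB c r(1) unfolding llp_def hom_def by auto
  then show ?thesis using that r by blast
qed

lemma splitting_coproductsE:
  assumes "splitting_coproducts C" and "is_coproduct C A B S i1 i2" and "f \<in> hom C X S"
  obtains XL XR fL fR Y j1 j2 \<theta> where "fL \<in> hom C XL A" and "fR \<in> hom C XR B"
    and "is_coproduct C XL XR Y j1 j2" and "\<theta> \<in> hom C Y X" and "iso C \<theta>"
    and "(f \<cdot> \<theta>) \<cdot> j1 = i1 \<cdot> fL" and "(f \<cdot> \<theta>) \<cdot> j2 = i2 \<cdot> fR"
  using assms(1)[unfolded splitting_coproducts_def, rule_format, OF assms(2,3)] that by blast

lemma disjoint_coproductsD:
  assumes "disjoint_coproducts C" and "is_coproduct C A B S i1 i2"
  shows "monic C i1" and "is_pullback C i1 i2 P p q \<Longrightarrow> initial C P"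
  using assms(1)[unfolded disjoint_coproducts_def, rule_format, OF assms(2)] by blast+

lemma pullback_liftE:
  assumes "is_pullback C f g P p q" and "u \<in> hom C W (Dom C f)" and "v \<in> hom C W (Dom C g)"
    and "f \<cdot> u = g \<cdot> v"
  obtains t where "t \<in> hom C W P" and "p \<cdot> t = u"
  using assms unfolding is_pullback_def by blast

text \<open>A cone over the coproduct injections factors through the initial pullback of \<open>i1\<close>
  and \<open>i2\<close>, so postcomposed with anything it factors through anything.\<close>

lemma disjoint_cone_factors_through:
  assumes bc: "bicomplete C" and dj: "disjoint_coproducts C" and S: "is_coproduct C A B S i1 i2"
    and u: "u \<in> hom C W A" and v: "v \<in> hom C W B" and uv: "i1 \<cdot> u = i2 \<cdot> v"
    and a: "a \<in> hom C A Z" and j: "j \<in> hom C X Z"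
  obtains e where "e \<in> hom C W X" and "j \<cdot> e = a \<cdot> u"
proof -
  have i1: "i1 \<in> hom C A S" and i2: "i2 \<in> hom C B S" using coproduct_injections[OF S] by auto
  obtain P p q where P: "is_pullback C i1 i2 P p q" using pullback_exists[OF bc i1 i2] by blast
  have "initial C P" using disjoint_coproductsD(2)[OF dj S P] .
  have p: "p \<in> hom C P A" using P i1 unfolding is_pullback_def hom_def by auto
  obtain t where t: "t \<in> hom C W P" "p \<cdot> t = u"
    using pullback_liftE[OF P] u v uv i1 i2 by (auto simp: hom_def)
  obtain e where e: "e \<in> hom C P X" using initial_homE[OF \<open>initial C P\<close>] hom_objs[OF j] by blast
  have "j \<cdot> e = a \<cdot> p"
    using initial_hom_unique[OF \<open>initial C P\<close> comp_in_hom[OF e j] comp_in_hom[OF p a]] .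
  then have "j \<cdot> (e \<cdot> t) = a \<cdot> u"
    using t comp_assoc[OF t(1) e j] comp_assoc[OF t(1) p a] by simp
  then show ?thesis using that comp_in_hom[OF t(1) e] by blast
qed

lemma factors_through_left_summand:
  assumes bc: "bicomplete C" and sp: "splitting_coproducts C" and dj: "disjoint_coproducts C"
    and S: "is_coproduct C A B S i1 i2" and Y: "is_coproduct C X Z Y j1 j2"
    and d: "d \<in> hom C A Y" and k: "k \<in> hom C Y S" and f: "f \<in> hom C Z B"
    and kd: "k \<cdot> d = i1" and kj2: "k \<cdot> j2 = i2 \<cdot> f"
  obtains g where "g \<in> hom C A X" and "j1 \<cdot> g = d"
proof -
  obtain AL AR gL gR W k1 k2 \<psi> where gL: "gL \<in> hom C AL X" and gR: "gR \<in> hom C AR Z"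
    and W: "is_coproduct C AL AR W k1 k2" and \<psi>: "\<psi> \<in> hom C W A" "iso C \<psi>"
    and dk1: "(d \<cdot> \<psi>) \<cdot> k1 = j1 \<cdot> gL" and dk2: "(d \<cdot> \<psi>) \<cdot> k2 = j2 \<cdot> gR"
    by (rule splitting_coproductsE[OF sp Y d])
  have k1: "k1 \<in> hom C AL W" and k2: "k2 \<in> hom C AR W" using coproduct_injections[OF W] by auto
  have i2: "i2 \<in> hom C B S" using coproduct_injections[OF S] by auto
  have j1: "j1 \<in> hom C X Y" and j2: "j2 \<in> hom C Z Y" using coproduct_injections[OF Y] by auto
  have \<psi>k2: "\<psi> \<cdot> k2 \<in> hom C AR A" using comp_in_hom[OF k2 \<psi>(1)] .
  have "i1 \<cdot> (\<psi> \<cdot> k2) = k \<cdot> ((d \<cdot> \<psi>) \<cdot> k2)"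
    using kd comp_assoc[OF \<psi>k2 d k] comp_assoc[OF k2 \<psi>(1) d] by simp
  also have "\<dots> = i2 \<cdot> (f \<cdot> gR)"
    using dk2 kj2 comp_assoc[OF gR j2 k] comp_assoc[OF gR f i2] by simp
  finally obtain e where e: "e \<in> hom C AR X" "j1 \<cdot> e = d \<cdot> (\<psi> \<cdot> k2)"
    using disjoint_cone_factors_through[OF bc dj S \<psi>k2 comp_in_hom[OF gR f] _ d j1] by blast
  obtain g where g: "g \<in> hom C W X" "g \<cdot> k1 = gL" "g \<cdot> k2 = e"
    using copairE[OF W gL e(1)] by blast
  have "j1 \<cdot> g = d \<cdot> \<psi>"
  proof (rule coproduct_hom_ext[OF W comp_in_hom[OF g(1) j1] comp_in_hom[OF \<psi>(1) d]])
    show "(j1 \<cdot> g) \<cdot> k1 = (d \<cdot> \<psi>) \<cdot> k1" using dk1 g(2) comp_assoc[OF k1 g(1) j1] by simp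
    show "(j1 \<cdot> g) \<cdot> k2 = (d \<cdot> \<psi>) \<cdot> k2"
      using e(2) g(3) comp_assoc[OF k2 g(1) j1] comp_assoc[OF k2 \<psi>(1) d] by simp
  qed
  moreover obtain \<psi>' where \<psi>': "\<psi>' \<in> hom C A W" "\<psi> \<cdot> \<psi>' = Idm C A"
    using isoE[OF \<psi>(2,1)] by blast
  ultimately have "j1 \<cdot> (g \<cdot> \<psi>') = d"
    using comp_assoc[OF \<psi>'(1) g(1) j1] comp_assoc[OF \<psi>'(1) \<psi>(1) d] comp_Idm_right[OF d] by simp
  then show ?thesis using that comp_in_hom[OF \<psi>'(1) g(1)] by blast
qed

lemma core_cofibration_codomain_split:
  assumes sp: "splitting_coproducts C" and cof: "core_cofibration C c" and c: "c \<in> hom C A B"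
    and S: "is_coproduct C A B S i1 i2"
  obtains XL XR fL fR Y j1 j2 \<phi> k where "is_coproduct C XL XR Y j1 j2"
    and "fL \<in> hom C XL A" and "fR \<in> hom C XR B" and "\<phi> \<in> hom C B Y" and "iso C \<phi>"
    and "k \<in> hom C Y S" and "k \<cdot> (\<phi> \<cdot> c) = i1" and "k \<cdot> j2 = i2 \<cdot> fR" and "(\<phi> \<cdot> c) \<cdot> fL = j1"
proof -
  have i1: "i1 \<in> hom C A S" using coproduct_injections[OF S] by blast
  obtain h r where h: "h \<in> hom C B S" "h \<cdot> c = i1"
    and r: "r \<in> hom C S B" "r \<cdot> i1 = c" "r \<cdot> h = Idm C B"
    using core_cofibration_lift[OF cof c S] by blast
  obtain XL XR fL fR Y j1 j2 \<theta> where fL: "fL \<in> hom C XL A" and fR: "fR \<in> hom C XR B"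
    and Y: "is_coproduct C XL XR Y j1 j2" and \<theta>: "\<theta> \<in> hom C Y B" "iso C \<theta>"
    and hj1: "(h \<cdot> \<theta>) \<cdot> j1 = i1 \<cdot> fL" and hj2: "(h \<cdot> \<theta>) \<cdot> j2 = i2 \<cdot> fR"
    by (rule splitting_coproductsE[OF sp S h(1)])
  obtain \<phi> where \<phi>: "\<phi> \<in> hom C B Y" "\<phi> \<cdot> \<theta> = Idm C Y" "\<theta> \<cdot> \<phi> = Idm C B"
    using isoE[OF \<theta>(2,1)] by blast
  have j1: "j1 \<in> hom C XL Y" using coproduct_injections[OF Y] by blast
  have \<theta>j1: "\<theta> \<cdot> j1 \<in> hom C XL B" using comp_in_hom[OF j1 \<theta>(1)] .
  have "\<theta> \<cdot> j1 = (r \<cdot> h) \<cdot> (\<theta> \<cdot> j1)" using r(3) comp_Idm_left[OF \<theta>j1] by simp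
  also have "\<dots> = r \<cdot> (i1 \<cdot> fL)"
    using hj1 comp_assoc[OF \<theta>j1 h(1) r(1)] comp_assoc[OF j1 \<theta>(1) h(1)] by simp
  also have "\<dots> = c \<cdot> fL" using r(2) comp_assoc[OF fL i1 r(1)] by simp
  finally have "(\<phi> \<cdot> c) \<cdot> fL = j1"
    using \<phi>(2) comp_assoc[OF fL c \<phi>(1)] comp_assoc[OF j1 \<theta>(1) \<phi>(1)] comp_Idm_left[OF j1] by simp
  moreover have "(h \<cdot> \<theta>) \<cdot> (\<phi> \<cdot> c) = i1"
    using h(2) \<phi>(3) comp_assoc[OF c \<phi>(1) \<theta>(1)] comp_assoc[OF comp_in_hom[OF c \<phi>(1)] \<theta>(1) h(1)]
      comp_Idm_left[OF c] by simp
  ultimately show ?thesis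
    using that[OF Y fL fR \<phi>(1) iso_inverse[OF \<theta>(1) \<phi>] comp_in_hom[OF \<theta>(1) h(1)] _ hj2] by blast
qed

end

theorem proposition5:
  fixes C :: "('o, 'm) cat" and c :: 'm
  assumes "is_category C"
    and "bicomplete C"
    and "splitting_coproducts C"
    and "disjoint_coproducts C"
    and "core_cofibration C c"
  shows "\<exists>X S i1 i2 \<phi>. is_coproduct C (Dom C c) X S i1 i2 \<and>
           \<phi> \<in> hom C (Cod C c) S \<and> iso C \<phi> \<and> Cmp C \<phi> c = i1"
proof -
  interpret category C by (rule category.intro) (fact assms(1))
  define A B where "A = Dom C c" and "B = Cod C c"
  have c: "c \<in> hom C A B" using assms(5) unfolding core_cofibration_def A_def B_def hom_def by simp
  obtain S i1 i2 where S: "is_coproduct C A B S i1 i2"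
    using coproduct_exists[OF assms(2)] hom_objs[OF c] by blast
  obtain XL XR fL fR Y j1 j2 \<phi> k where Y: "is_coproduct C XL XR Y j1 j2"
    and fL: "fL \<in> hom C XL A" and fR: "fR \<in> hom C XR B" and \<phi>: "\<phi> \<in> hom C B Y" "iso C \<phi>"
    and k: "k \<in> hom C Y S" "k \<cdot> (\<phi> \<cdot> c) = i1" "k \<cdot> j2 = i2 \<cdot> fR" and \<phi>cfL: "(\<phi> \<cdot> c) \<cdot> fL = j1"
    by (rule core_cofibration_codomain_split[OF assms(3,5) c S])
  have \<phi>c: "\<phi> \<cdot> c \<in> hom C A Y" using comp_in_hom[OF c \<phi>(1)] .
  obtain g where g: "g \<in> hom C A XL" "j1 \<cdot> g = \<phi> \<cdot> c"
    using factors_through_left_summand[OF assms(2-4) S Y \<phi>c k(1) fR k(2,3)] by blast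
  have "monic C (\<phi> \<cdot> c)"
    using monic_of_comp_monic[OF _ \<phi>c k(1)] k(2) disjoint_coproductsD(1)[OF assms(4) S] by simp
  then have "fL \<cdot> g = Idm C A" "g \<cdot> fL = Idm C XL"
    using monic_factorizations_inverse[OF disjoint_coproductsD(1)[OF assms(4) Y] _ _ \<phi>c fL g(1)
        \<phi>cfL[symmetric] g(2)] coproduct_injections[OF Y] by blast+
  then have "is_coproduct C A XR Y (j1 \<cdot> g) j2"
    using coproduct_iso_left_summand[OF Y g(1) fL] by blast
  then show ?thesis using \<phi> g(2)[symmetric] unfolding A_def B_def by blast
qed

end
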